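(* For every integer $n\ge3$, the number of cusps of $\Gamma_n$ equals $$\frac{n^2}{2}\prod_{p\mid n,\ p\text{ prime}}\left(1-p^{-2}\right).$$
   Context: $\Gamma_n=\left\{\begin{pmatrix}a&b\\c&d\end{pmatrix}\in\mathrm{SL}_2(\mathbb Z):n^2\mid c,\ a\equiv d\equiv\pm1\pmod n\right\}$. The cusps of $\Gamma_n$ are the orbits of $\Gamma_n$ acting by Möbius transformations on $\mathbb Q\cup\{\infty\}$. *)

theory Defs
  imports "HOL-Analysis.Analysis" "HOL-Computational_Algebra.Primes" "HOL-Number_Theory.Cong"
begin

text \<open>A 2x2 integer matrix (a,b,c,d) stands for the matrix with rows (a b) and (c d).
  The extended rationals Q u {oo} are modelled as rat option, None being oo.\<close>

type_synonym mat2 = "int \<times> int \<times> int \<times> int"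

definition SL2Z :: "mat2 set" where
  "SL2Z = {(a,b,c,d). a*d - b*c = 1}"

definition Gamma_n :: "nat \<Rightarrow> mat2 set" where
  "Gamma_n n = {(a,b,c,d) \<in> SL2Z. (int n)^2 dvd c \<and>
      ([a = 1] (mod int n) \<and> [d = 1] (mod int n) \<or>
       [a = -1] (mod int n) \<and> [d = -1] (mod int n))}"

fun moebius :: "mat2 \<Rightarrow> rat option \<Rightarrow> rat option" where
  "moebius (a,b,c,d) None = (if c = 0 then None else Some (of_int a / of_int c))"
| "moebius (a,b,c,d) (Some x) =
     (if of_int c * x + of_int d = 0 then None
      else Some ((of_int a * x + of_int b) / (of_int c * x + of_int d)))"

definition orbit :: "mat2 set \<Rightarrow> rat option \<Rightarrow> rat option set" where
  "orbit G x = (\<lambda>g. moebius g x) ` G"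

definition cusps :: "mat2 set \<Rightarrow> rat option set set" where
  "cusps G = range (orbit G)"

end

(*
  Rescaling cusps by x |-> n x (conjugation by diag(n, 1)) carries Gamma_n onto the group of
  matrices congruent to 1 or -1 modulo n, so both groups have the same number of cusps.
  A cusp is a primitive integer vector (p, q) up to sign. Two primitive vectors that are
  congruent mod n lie in one orbit of the principal congruence subgroup Gamma(n): a primitive
  vector congruent to (1, 0) is the first column of a matrix in Gamma(n), and Gamma(n) is
  normal in SL2(Z). Since every residue vector t with gcd(t, n) = 1 lifts to a primitive vector,
  the cusps correspond to the pairs {t, -t} of such residue vectors. A sieve over the prime
  divisors of n counts n^2 prod (1 - p^-2) of them, and for n >= 3 no t is congruent to -t.
*)

theory Submission
  imports Defs
begin

section \<open>Integer matrices and primitive vectors\<close>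

fun det2 :: "mat2 \<Rightarrow> int" where
  "det2 (a, b, c, d) = a * d - b * c"

fun mat2_mult :: "mat2 \<Rightarrow> mat2 \<Rightarrow> mat2" where
  "mat2_mult (a, b, c, d) (a', b', c', d') =
     (a * a' + b * c', a * b' + b * d', c * a' + d * c', c * b' + d * d')"

fun mat2_vec :: "mat2 \<Rightarrow> int \<times> int \<Rightarrow> int \<times> int" where
  "mat2_vec (a, b, c, d) (p, q) = (a * p + b * q, c * p + d * q)"

fun mat2_adj :: "mat2 \<Rightarrow> mat2" where
  "mat2_adj (a, b, c, d) = (d, - b, - c, a)"

lemma SL2Z_iff_det2: "g \<in> SL2Z \<longleftrightarrow> det2 g = 1"
  by (cases g) (simp add: SL2Z_def)

lemma det2_mult: "det2 (mat2_mult g h) = det2 g * det2 h"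
  by (cases g; cases h) (simp add: algebra_simps)

lemma det2_adj [simp]: "det2 (mat2_adj g) = det2 g"
  by (cases g) simp

lemma det2_uminus [simp]: "det2 (- g) = det2 g"
  by (cases g) simp

lemma mat2_vec_mult: "mat2_vec (mat2_mult g h) v = mat2_vec g (mat2_vec h v)"
  by (cases g; cases h; cases v) (simp add: algebra_simps)

lemma mat2_vec_uminus: "mat2_vec (- g) v = - mat2_vec g v"
  by (cases g; cases v) simp

lemma mat2_vec_uminus_right: "mat2_vec g (- v) = - mat2_vec g v"
  by (cases g; cases v) simp

lemma mat2_mult_adj: "det2 g = 1 \<Longrightarrow> mat2_mult g (mat2_adj g) = (1, 0, 0, 1)"
  by (cases g) (simp add: algebra_simps)

lemma mat2_adj_mult: "det2 g = 1 \<Longrightarrow> mat2_mult (mat2_adj g) g = (1, 0, 0, 1)"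
  by (cases g) (simp add: algebra_simps)

lemma mat2_vec_one [simp]: "mat2_vec (1, 0, 0, 1) v = v"
  by (cases v) simp

lemma mat2_vec_mat2_vec_adj: "det2 g = 1 \<Longrightarrow> mat2_vec g (mat2_vec (mat2_adj g) v) = v"
  by (simp flip: mat2_vec_mult add: mat2_mult_adj)

lemma mat2_vec_adj_mat2_vec: "det2 g = 1 \<Longrightarrow> mat2_vec (mat2_adj g) (mat2_vec g v) = v"
  by (simp flip: mat2_vec_mult add: mat2_adj_mult)

lemma dvd_mat2_vec:
  "c dvd fst v \<Longrightarrow> c dvd snd v \<Longrightarrow> c dvd fst (mat2_vec g v) \<and> c dvd snd (mat2_vec g v)"
  by (cases g; cases v) simp

fun primitive :: "int \<times> int \<Rightarrow> bool" where
  "primitive (p, q) \<longleftrightarrow> coprime p q"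

lemma primitive_uminus [simp]: "primitive (- v) \<longleftrightarrow> primitive v"
  by (cases v) simp

lemma primitive_mat2_vec:
  assumes "det2 g = 1" "primitive v"
  shows "primitive (mat2_vec g v)"
proof -
  have "is_unit c" if "c dvd fst (mat2_vec g v)" "c dvd snd (mat2_vec g v)" for c
  proof -
    have "c dvd fst v" "c dvd snd v"
      using dvd_mat2_vec[OF that, of "mat2_adj g"] assms(1) by (simp_all add: mat2_vec_adj_mat2_vec)
    then show ?thesis
      using assms(2) by (cases v) (metis coprime_common_divisor fst_conv snd_conv primitive.simps)
  qed
  then show ?thesis
    by (cases "mat2_vec g v") (auto intro: coprimeI)
qed

fun ratio :: "int \<times> int \<Rightarrow> rat option" where
  "ratio (p, q) = (if q = 0 then None else Some (of_int p / of_int q))"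

fun primitive_rep :: "rat option \<Rightarrow> int \<times> int" where
  "primitive_rep None = (1, 0)"
| "primitive_rep (Some r) = quotient_of r"

lemma ratio_primitive_rep [simp]: "ratio (primitive_rep x) = x"
proof (cases x)
  case (Some r)
  obtain p q where "quotient_of r = (p, q)"
    by (cases "quotient_of r")
  then show ?thesis
    using Some quotient_of_denom_pos quotient_of_div by fastforce
qed simp

lemma primitive_primitive_rep [simp]: "primitive (primitive_rep x)"
proof (cases x)
  case (Some r)
  then show ?thesis
    using quotient_of_coprime by (cases "quotient_of r") auto
qed simp

lemma primitive_nonzero: "primitive v \<Longrightarrow> v \<noteq> 0"
  by (cases v) (auto simp: zero_prod_def)

lemma moebius_ratio:
  assumes "v \<noteq> 0"
  shows "moebius g (ratio v) = ratio (mat2_vec g v)"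
proof -
  obtain a b c d where g: "g = (a, b, c, d)"
    by (cases g) auto
  obtain p q where v: "v = (p, q)"
    by (cases v)
  show ?thesis
  proof (cases "q = 0")
    case True
    then show ?thesis
      using assms by (simp add: g v zero_prod_def)
  next
    case False
    have "of_int a * (of_int p / of_int q) + of_int b = (of_int (a * p + b * q) / of_int q :: rat)"
      "of_int c * (of_int p / of_int q) + of_int d = (of_int (c * p + d * q) / of_int q :: rat)"
      using False by (simp_all add: field_simps)
    then show ?thesis
      using False by (simp add: g v del: of_int_add of_int_mult)
  qed
qed

lemma primitive_ratio_eq:
  assumes "primitive v" "primitive w" "ratio v = ratio w"
  shows "w = v \<or> w = - v"
proof -
  obtain p q p' q' where v: "v = (p, q)" and w: "w = (p', q')"
    by (cases v; cases w)
  show ?thesis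
  proof (cases "q = 0")
    case True
    then have "q' = 0"
      using assms(3) by (simp add: v w split: if_splits)
    then show ?thesis
      using True assms(1,2) by (auto simp: v w)
  next
    case False
    then have "q' \<noteq> 0" and "p * q' = p' * q"
      using assms(3) by (auto simp: v w field_simps split: if_splits)
        (metis of_int_eq_iff of_int_mult)
    moreover have "coprime p q" "coprime p' q'"
      using assms(1,2) by (simp_all add: v w)
    then have "q dvd q'" "q' dvd q"
      using \<open>p * q' = p' * q\<close>
      by (metis coprime_commute coprime_dvd_mult_right_iff dvd_triv_right)+
    then have "q' = q \<or> q' = - q"
      using zdvd_antisym_abs abs_eq_iff by metis
    ultimately show ?thesis
      using False by (auto simp: v w) (metis minus_mult_left mult_cancel_right)+
  qed
qed

section \<open>Orbits of the principal congruence subgroup\<close>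

fun vec_mod :: "int \<Rightarrow> int \<times> int \<Rightarrow> int \<times> int" where
  "vec_mod m (p, q) = (p mod m, q mod m)"

fun mat2_mod :: "int \<Rightarrow> mat2 \<Rightarrow> mat2" where
  "mat2_mod m (a, b, c, d) = (a mod m, b mod m, c mod m, d mod m)"

lemma mat2_mod_mult_cong:
  "mat2_mod m g = mat2_mod m g' \<Longrightarrow> mat2_mod m h = mat2_mod m h' \<Longrightarrow>
    mat2_mod m (mat2_mult g h) = mat2_mod m (mat2_mult g' h')"
  by (cases g; cases g'; cases h; cases h') (auto intro: mod_add_cong mod_mult_cong)

lemma vec_mod_mat2_vec_cong:
  "mat2_mod m g = mat2_mod m g' \<Longrightarrow> vec_mod m v = vec_mod m v' \<Longrightarrow>
    vec_mod m (mat2_vec g v) = vec_mod m (mat2_vec g' v')"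
  by (cases g; cases g'; cases v; cases v') (auto intro: mod_add_cong mod_mult_cong)

lemma vec_mod_uminus_cong: "vec_mod m v = vec_mod m v' \<Longrightarrow> vec_mod m (- v) = vec_mod m (- v')"
  by (cases v; cases v') (auto intro: mod_minus_cong)

lemma mat2_mod_uminus_cong: "mat2_mod m g = mat2_mod m g' \<Longrightarrow> mat2_mod m (- g) = mat2_mod m (- g')"
  by (cases g; cases g') (auto intro: mod_minus_cong)

lemma congruent_one_conj:
  assumes "det2 \<gamma> = 1" "mat2_mod m h = mat2_mod m (1, 0, 0, 1)"
  shows "mat2_mod m (mat2_mult \<gamma> (mat2_mult h (mat2_adj \<gamma>))) = mat2_mod m (1, 0, 0, 1)"
proof -
  have "mat2_mod m (mat2_mult \<gamma> (mat2_mult h (mat2_adj \<gamma>))) =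
      mat2_mod m (mat2_mult \<gamma> (mat2_mult (1, 0, 0, 1) (mat2_adj \<gamma>)))"
    using assms(2) by (intro mat2_mod_mult_cong refl)
  also have "mat2_mult (1, 0, 0, 1) (mat2_adj \<gamma>) = mat2_adj \<gamma>"
    by (cases \<gamma>) simp
  finally show ?thesis
    using assms(1) by (simp add: mat2_mult_adj)
qed

lemma primitive_completion:
  assumes "primitive v"
  obtains \<gamma> where "det2 \<gamma> = 1" "mat2_vec \<gamma> (1, 0) = v"
proof -
  obtain p q where v: "v = (p, q)"
    by (cases v)
  obtain t s where "t * p + s * q = 1"
    using bezout_int[of p q] assms by (auto simp: v)
  then have "det2 (p, - s, q, t) = 1"
    by (simp add: algebra_simps)
  moreover have "mat2_vec (p, - s, q, t) (1, 0) = v"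
    by (simp add: v)
  ultimately show ?thesis
    using that by blast
qed

lemma congruent_one_mapping_e1:
  assumes "primitive u" "vec_mod m u = vec_mod m (1, 0)"
  obtains h where "det2 h = 1" "mat2_mod m h = mat2_mod m (1, 0, 0, 1)" "mat2_vec h (1, 0) = u"
proof -
  obtain u1 u2 where u: "u = (u1, u2)"
    by (cases u)
  obtain k where k: "u1 = 1 + m * k"
    using assms(2) by (auto simp: u mod_eq_dvd_iff elim!: dvdE) (metis diff_add_cancel add.commute)
  obtain y where y: "u2 = m * y"
    using assms(2) by (auto simp: u mod_eq_0_iff_dvd elim!: dvdE)
  obtain \<alpha> \<beta> where \<alpha>\<beta>: "\<alpha> * u1 + \<beta> * u2 = 1"
    using bezout_int[of u1 u2] assms(1) by (auto simp: u)
  define h where "h = (u1, m * k * \<beta>, u2, 1 - m * k * \<alpha>)"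
  have "det2 h = u1 - m * k * (\<alpha> * u1 + \<beta> * u2)"
    by (simp add: h_def algebra_simps)
  then have "det2 h = 1"
    using k \<alpha>\<beta> by simp
  moreover have "mat2_mod m h = mat2_mod m (1, 0, 0, 1)"
    using k y by (simp add: h_def mod_eq_dvd_iff)
  moreover have "mat2_vec h (1, 0) = u"
    by (simp add: h_def u)
  ultimately show ?thesis
    using that by blast
qed

lemma congruent_one_transitive:
  assumes "primitive v" "primitive w" "vec_mod m v = vec_mod m w"
  obtains g where "det2 g = 1" "mat2_mod m g = mat2_mod m (1, 0, 0, 1)" "mat2_vec g v = w"
proof -
  \<comment> \<open>move \<open>v\<close> to \<open>(1, 0)\<close> by a completion \<open>\<gamma>\<close> of \<open>v\<close>, solve there and conjugate back\<close>
  obtain \<gamma> where \<gamma>: "det2 \<gamma> = 1" "mat2_vec \<gamma> (1, 0) = v"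
    using primitive_completion assms(1) by blast
  define u where "u = mat2_vec (mat2_adj \<gamma>) w"
  have "primitive u"
    using primitive_mat2_vec \<gamma>(1) assms(2) by (simp add: u_def)
  moreover have "vec_mod m u = vec_mod m (mat2_vec (mat2_adj \<gamma>) v)"
    unfolding u_def using assms(3) by (intro vec_mod_mat2_vec_cong) simp_all
  then have "vec_mod m u = vec_mod m (1, 0)"
    using \<gamma>(1) by (simp add: mat2_vec_adj_mat2_vec flip: \<gamma>(2))
  ultimately obtain h where h: "det2 h = 1" "mat2_mod m h = mat2_mod m (1, 0, 0, 1)"
      "mat2_vec h (1, 0) = u"
    using congruent_one_mapping_e1 by blast
  define g where "g = mat2_mult \<gamma> (mat2_mult h (mat2_adj \<gamma>))"
  have "det2 g = 1"
    using \<gamma>(1) h(1) by (simp add: g_def det2_mult)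
  moreover have "mat2_mod m g = mat2_mod m (1, 0, 0, 1)"
    unfolding g_def using \<gamma>(1) h(2) by (rule congruent_one_conj)
  moreover have "mat2_vec g v = w"
    using \<gamma>(1) h(3) by (simp add: g_def u_def mat2_vec_mult mat2_vec_adj_mat2_vec mat2_vec_mat2_vec_adj
        flip: \<gamma>(2))
  ultimately show ?thesis
    using that by blast
qed

definition Gamma_pm :: "int \<Rightarrow> mat2 set" where
  "Gamma_pm m = {g \<in> SL2Z. mat2_mod m g = mat2_mod m (1, 0, 0, 1) \<or>
      mat2_mod m g = mat2_mod m (- 1, 0, 0, - 1)}"

definition residue_class :: "int \<Rightarrow> int \<times> int \<Rightarrow> (int \<times> int) set" where
  "residue_class m v = {vec_mod m v, vec_mod m (- v)}"

definition cusp_class :: "int \<Rightarrow> rat option \<Rightarrow> (int \<times> int) set" where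
  "cusp_class m x = residue_class m (primitive_rep x)"

lemma residue_class_uminus [simp]: "residue_class m (- v) = residue_class m v"
  by (auto simp: residue_class_def)

lemma residue_class_vec_mod [simp]: "residue_class m (vec_mod m v) = residue_class m v"
  by (cases v) (simp add: residue_class_def mod_minus_eq)

lemma residue_class_mat2_vec:
  assumes "g \<in> Gamma_pm m"
  shows "residue_class m (mat2_vec g v) = residue_class m v"
proof -
  have "mat2_mod m g = mat2_mod m (1, 0, 0, 1) \<or> mat2_mod m g = mat2_mod m (- (1, 0, 0, 1))"
    using assms by (simp add: Gamma_pm_def)
  then obtain w where "w = v \<or> w = - v" "vec_mod m (mat2_vec g v) = vec_mod m w"
    using vec_mod_mat2_vec_cong[OF _ refl, of m g _ v] by (metis mat2_vec_one mat2_vec_uminus)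
  then show ?thesis
    by (auto simp: residue_class_def dest: vec_mod_uminus_cong)
qed

lemma Gamma_pm_transitive:
  assumes "primitive v" "primitive w" "residue_class m v = residue_class m w"
  obtains g where "g \<in> Gamma_pm m" "mat2_vec g v = w"
proof -
  have "vec_mod m w \<in> {vec_mod m v, vec_mod m (- v)}"
    using assms(3) unfolding residue_class_def by (metis insertI1)
  define v' where "v' = (if vec_mod m v = vec_mod m w then v else - v)"
  have "primitive v'"
    using assms(1) by (simp add: v'_def)
  moreover have "vec_mod m v' = vec_mod m w"
    using \<open>vec_mod m w \<in> _\<close> by (auto simp: v'_def)
  ultimately obtain g where g: "det2 g = 1" "mat2_mod m g = mat2_mod m (1, 0, 0, 1)" "mat2_vec g v' = w"
    using congruent_one_transitive assms(2) by metis
  define g' where "g' = (if vec_mod m v = vec_mod m w then g else - g)"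
  have "g' \<in> Gamma_pm m"
    using g mat2_mod_uminus_cong[OF g(2)] by (simp add: g'_def Gamma_pm_def SL2Z_iff_det2)
  moreover have "mat2_vec g' v = w"
    using g(3) by (simp add: g'_def v'_def mat2_vec_uminus mat2_vec_uminus_right split: if_splits)
  ultimately show ?thesis
    using that by blast
qed

lemma orbit_Gamma_pm_iff: "y \<in> orbit (Gamma_pm m) x \<longleftrightarrow> cusp_class m y = cusp_class m x"
proof
  assume "y \<in> orbit (Gamma_pm m) x"
  then obtain g where g: "g \<in> Gamma_pm m" "y = moebius g x"
    by (auto simp: orbit_def)
  define v where "v = primitive_rep x"
  have "det2 g = 1"
    using g(1) by (simp add: Gamma_pm_def SL2Z_iff_det2)
  then have "primitive (mat2_vec g v)"
    by (simp add: v_def primitive_mat2_vec)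
  moreover have "ratio (mat2_vec g v) = ratio (primitive_rep y)"
    using g(2) moebius_ratio[OF primitive_nonzero[OF primitive_primitive_rep], of g x]
    by (simp add: v_def)
  ultimately have "primitive_rep y = mat2_vec g v \<or> primitive_rep y = - mat2_vec g v"
    using primitive_ratio_eq primitive_primitive_rep by blast
  then have "residue_class m (primitive_rep y) = residue_class m (mat2_vec g v)"
    by (elim disjE) simp_all
  then show "cusp_class m y = cusp_class m x"
    using residue_class_mat2_vec[OF g(1)] by (simp add: cusp_class_def v_def)
next
  assume "cusp_class m y = cusp_class m x"
  then obtain g where g: "g \<in> Gamma_pm m" "mat2_vec g (primitive_rep x) = primitive_rep y"
    using Gamma_pm_transitive primitive_primitive_rep by (metis cusp_class_def)
  then have "moebius g x = y"
    using moebius_ratio[OF primitive_nonzero[OF primitive_primitive_rep], of g x] by simp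
  then show "y \<in> orbit (Gamma_pm m) x"
    using g(1) by (auto simp: orbit_def)
qed

section \<open>Primitive residue vectors\<close>

lemma coprime_int_primeI:
  fixes a b :: int
  assumes "\<And>l. prime l \<Longrightarrow> l dvd a \<Longrightarrow> l dvd b \<Longrightarrow> False"
  shows "coprime a b"
proof (rule coprimeI)
  fix c :: int
  assume "c dvd a" "c dvd b"
  show "is_unit c"
  proof (rule ccontr)
    assume "\<not> is_unit c"
    then obtain l where "prime l" "l dvd c"
      using prime_factor_int[of c] by auto
    then show False
      using assms \<open>c dvd a\<close> \<open>c dvd b\<close> dvd_trans by blast
  qed
qed

lemma exists_coprime_shift:
  fixes u v m :: int
  assumes "v \<noteq> 0" "\<And>l. prime l \<Longrightarrow> l dvd u \<Longrightarrow> l dvd v \<Longrightarrow> \<not> l dvd m"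
  obtains t where "coprime (u + m * t) v"
proof -
  define L where "L = {l. prime l \<and> l dvd v \<and> \<not> l dvd u}"
  have "L \<subseteq> {- \<bar>v\<bar>..\<bar>v\<bar>}"
    by (auto simp: L_def dest!: dvd_imp_le_int[OF assms(1)])
  then have "finite L"
    using finite_subset by blast
  have "\<not> l dvd u + m * \<Prod>L" if l: "prime l" "l dvd v" for l
  proof (cases "l dvd u")
    case True
    have "l \<notin> L"
      using True by (simp add: L_def)
    then have "\<not> l dvd \<Prod>L"
      using prime_dvd_prod_iff[OF \<open>finite L\<close> l(1)] primes_dvd_imp_eq l(1) by (auto simp: L_def)
    moreover have "\<not> l dvd m"
      using assms(2) l True by blast
    ultimately have "\<not> l dvd m * \<Prod>L"
      using prime_dvd_mult_iff l(1) by blast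
    then show ?thesis
      using True dvd_add_right_iff by blast
  next
    case False
    then have "l dvd \<Prod>L"
      using l \<open>finite L\<close> by (intro dvd_prodI) (auto simp: L_def)
    then show ?thesis
      using False dvd_add_left_iff by (metis dvd_mult)
  qed
  then have "coprime (u + m * \<Prod>L) v"
    by (auto intro: coprime_int_primeI)
  then show ?thesis
    using that by blast
qed

definition residues_avoiding :: "int \<Rightarrow> int set \<Rightarrow> (int \<times> int) set" where
  "residues_avoiding m S = {(u, v) \<in> {0..<m} \<times> {0..<m}. \<forall>l\<in>S. \<not> (l dvd u \<and> l dvd v)}"

definition primitive_residues :: "int \<Rightarrow> (int \<times> int) set" where
  "primitive_residues m = residues_avoiding m {l. prime l \<and> l dvd m}"

lemma finite_residues_avoiding [simp]: "finite (residues_avoiding m S)"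
  by (rule finite_subset[of _ "{0..<m} \<times> {0..<m}"]) (auto simp: residues_avoiding_def)

lemma finite_primitive_residues [simp]: "finite (primitive_residues m)"
  by (simp add: primitive_residues_def)

lemma vec_mod_primitive_residues [simp]: "t \<in> primitive_residues m \<Longrightarrow> vec_mod m t = t"
  by (auto simp: primitive_residues_def residues_avoiding_def)

lemma vec_mod_in_primitive_residues_iff:
  assumes "m > 0"
  shows "vec_mod m (p, q) \<in> primitive_residues m \<longleftrightarrow>
    (\<forall>l. prime l \<longrightarrow> l dvd m \<longrightarrow> \<not> (l dvd p \<and> l dvd q))"
  using assms by (auto simp: primitive_residues_def residues_avoiding_def dvd_mod_iff)

lemma vec_mod_in_primitive_residues:
  assumes "m > 0" "primitive v"
  shows "vec_mod m v \<in> primitive_residues m"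
proof -
  obtain p q where v: "v = (p, q)"
    by (cases v)
  have "\<not> (l dvd p \<and> l dvd q)" if "prime l" for l
    using assms(2) that coprime_common_divisor not_prime_unit by (metis v primitive.simps)
  then show ?thesis
    using assms(1) vec_mod_in_primitive_residues_iff[of m p q] by (simp add: v)
qed

lemma primitive_residue_lift:
  assumes "m > 0" "t \<in> primitive_residues m"
  obtains v where "primitive v" "vec_mod m v = t"
proof -
  obtain a b where t: "t = (a, b)"
    by (cases t)
  have ab: "0 \<le> a" "a < m" "0 \<le> b" "b < m" "\<And>l. prime l \<Longrightarrow> l dvd m \<Longrightarrow> \<not> (l dvd a \<and> l dvd b)"
    using assms(2) by (auto simp: t primitive_residues_def residues_avoiding_def)
  have "\<not> l dvd m" if "prime l" "l dvd a" "l dvd b + m" for l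
    using ab(5) that by (metis dvd_add_left_iff)
  \<comment> \<open>the second entry is shifted to \<open>b + m\<close> because \<open>b\<close> itself may be \<open>0\<close>\<close>
  then obtain s where "coprime (a + m * s) (b + m)"
    using exists_coprime_shift[of "b + m" a m] ab assms(1) by force
  moreover have "vec_mod m (a + m * s, b + m) = t"
    using ab by (simp add: t)
  ultimately show ?thesis
    using that primitive.simps by blast
qed

lemma range_cusp_class:
  assumes "m > 0"
  shows "range (cusp_class m) = residue_class m ` primitive_residues m"
proof (intro equalityI subsetI)
  fix k
  assume "k \<in> range (cusp_class m)"
  then obtain x where k: "k = cusp_class m x"
    by blast
  obtain p q where pq: "primitive_rep x = (p, q)"
    by (cases "primitive_rep x")
  then have "vec_mod m (p, q) \<in> primitive_residues m"
    using vec_mod_in_primitive_residues[OF assms primitive_primitive_rep[of x]] by simp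
  then show "k \<in> residue_class m ` primitive_residues m"
    using k pq residue_class_vec_mod[of m "(p, q)"] unfolding cusp_class_def by (metis image_eqI)
next
  fix k
  assume "k \<in> residue_class m ` primitive_residues m"
  then obtain t where t: "t \<in> primitive_residues m" "k = residue_class m t"
    by blast
  then obtain v where v: "primitive v" "vec_mod m v = t"
    using primitive_residue_lift assms by blast
  then have "primitive_rep (ratio v) = v \<or> primitive_rep (ratio v) = - v"
    using primitive_ratio_eq primitive_primitive_rep ratio_primitive_rep by metis
  then have "cusp_class m (ratio v) = residue_class m v"
    unfolding cusp_class_def by (metis residue_class_uminus)
  also have "\<dots> = k"
    using t v residue_class_vec_mod by metis
  finally have "cusp_class m (ratio v) = k" .
  then show "k \<in> range (cusp_class m)"
    by blast
qed

lemma vec_mod_uminus_vec_mod [simp]: "vec_mod m (- vec_mod m v) = vec_mod m (- v)"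
  by (cases v) (simp add: mod_minus_eq)

lemma vec_mod_uminus_primitive_residues:
  assumes "t \<in> primitive_residues m"
  shows "vec_mod m (- t) \<in> primitive_residues m"
proof -
  obtain a b where t: "t = (a, b)"
    by (cases t)
  have "m > 0"
    using assms by (auto simp: t primitive_residues_def residues_avoiding_def)
  then show ?thesis
    using assms vec_mod_primitive_residues[OF assms] vec_mod_in_primitive_residues_iff[of m a b]
      vec_mod_in_primitive_residues_iff[of m "- a" "- b"]
    by (simp add: t)
qed

lemma exists_prime_dvd_of_dvd_double:
  fixes m a b :: int
  assumes "m \<ge> 3" "m dvd 2 * a" "m dvd 2 * b"
  obtains l where "prime l" "l dvd m" "l dvd a" "l dvd b"
proof -
  obtain k where k: "k dvd m" "k dvd a" "k dvd b" "\<bar>k\<bar> \<noteq> 1"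
  proof (cases "even m")
    case True
    then obtain k where "m = 2 * k"
      by (auto elim: evenE)
    then show ?thesis
      using assms by (intro that[of k]) auto
  next
    case False
    then have "coprime m 2"
      by (simp add: coprime_commute)
    then have "m dvd a" "m dvd b"
      using assms by (simp_all add: coprime_dvd_mult_right_iff)
    then show ?thesis
      using assms by (intro that[of m]) auto
  qed
  then obtain l where "prime l" "l dvd k"
    using prime_factor_int by blast
  then show ?thesis
    using that k dvd_trans by blast
qed

lemma vec_mod_uminus_neq:
  assumes "m \<ge> 3" "t \<in> primitive_residues m"
  shows "vec_mod m (- t) \<noteq> t"
proof
  assume eq: "vec_mod m (- t) = t"
  obtain a b where t: "t = (a, b)"
    by (cases t)
  have ab: "a mod m = a" "b mod m = b" "\<And>l. prime l \<Longrightarrow> l dvd m \<Longrightarrow> \<not> (l dvd a \<and> l dvd b)"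
    using assms(2) by (auto simp: t primitive_residues_def residues_avoiding_def)
  have "(- a) mod m = a mod m" "(- b) mod m = b mod m"
    using eq ab by (simp_all add: t)
  then have "m dvd 2 * a" "m dvd 2 * b"
    by (simp_all add: mod_eq_dvd_iff dvd_minus_iff flip: minus_add_distrib mult_2)
  then show False
    using exists_prime_dvd_of_dvd_double assms(1) ab(3) by metis
qed

lemma card_doubletons_involution:
  assumes "finite A" "\<And>a. a \<in> A \<Longrightarrow> f a \<in> A" "\<And>a. a \<in> A \<Longrightarrow> f (f a) = a"
    "\<And>a. a \<in> A \<Longrightarrow> f a \<noteq> a"
  shows "2 * card ((\<lambda>a. {a, f a}) ` A) = card A"
proof -
  let ?C = "(\<lambda>a. {a, f a}) ` A"
  have "2 * card ?C = card (\<Union>?C)"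
  proof (rule card_partition)
    show "finite ?C" "finite (\<Union>?C)"
      using assms(1,2) by auto
    show "card c = 2" if "c \<in> ?C" for c
      using that assms(4) by (force simp: card_insert_if)
    show "c1 \<inter> c2 = {}" if "c1 \<in> ?C" "c2 \<in> ?C" "c1 \<noteq> c2" for c1 c2
      using that assms(3) by auto metis+
  qed
  moreover have "\<Union>?C = A"
    using assms(2) by auto
  ultimately show ?thesis
    by simp
qed

lemma card_residue_classes:
  assumes "m \<ge> 3"
  shows "2 * card (residue_class m ` primitive_residues m) = card (primitive_residues m)"
proof -
  have "residue_class m ` primitive_residues m =
      (\<lambda>t. {t, vec_mod m (- t)}) ` primitive_residues m"
    by (intro image_cong refl) (simp add: residue_class_def)
  also have "2 * card \<dots> = card (primitive_residues m)"
    using vec_mod_uminus_primitive_residues vec_mod_uminus_neq[OF assms]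
    by (intro card_doubletons_involution) simp_all
  finally show ?thesis .
qed

lemma residues_avoiding_multiples:
  assumes "prime p" "p \<notin> S" "\<And>l. l \<in> S \<Longrightarrow> prime l" "m = p * m'"
  shows "{x \<in> residues_avoiding m S. p dvd fst x \<and> p dvd snd x} =
    (\<lambda>(u, v). (p * u, p * v)) ` residues_avoiding m' S"
proof -
  have "p > 0"
    using assms(1) prime_gt_0_int by blast
  have dvd_iff: "l dvd p * u \<longleftrightarrow> l dvd u" if "l \<in> S" for l u
  proof -
    have "\<not> l dvd p"
      using assms(1-3) that primes_dvd_imp_eq by blast
    then show ?thesis
      using prime_dvd_mult_iff assms(3)[OF that] by blast
  qed
  show ?thesis
  proof (intro equalityI subsetI)
    fix x
    assume x: "x \<in> {x \<in> residues_avoiding m S. p dvd fst x \<and> p dvd snd x}"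
    then obtain u v where "x = (p * u, p * v)"
      by (cases x) (auto elim!: dvdE)
    then show "x \<in> (\<lambda>(u, v). (p * u, p * v)) ` residues_avoiding m' S"
      using x \<open>p > 0\<close> assms(4) dvd_iff
      by (auto simp: residues_avoiding_def zero_le_mult_iff intro!: image_eqI[of _ _ "(u, v)"])
  next
    fix x
    assume "x \<in> (\<lambda>(u, v). (p * u, p * v)) ` residues_avoiding m' S"
    then show "x \<in> {x \<in> residues_avoiding m S. p dvd fst x \<and> p dvd snd x}"
      using \<open>p > 0\<close> assms(4) dvd_iff by (auto simp: residues_avoiding_def)
  qed
qed

lemma card_residues_avoiding:
  assumes "finite S" "\<And>l. l \<in> S \<Longrightarrow> prime l \<and> l dvd m" "m > 0"
  shows "real (card (residues_avoiding m S)) = of_int m ^ 2 * (\<Prod>l\<in>S. 1 - 1 / of_int l ^ 2)"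
  using assms
proof (induction S arbitrary: m rule: finite_induct)
  case empty
  have "residues_avoiding m {} = {0..<m} \<times> {0..<m}"
    by (auto simp: residues_avoiding_def)
  then show ?case
    using empty.prems by (simp add: power2_eq_square)
next
  case (insert p S)
  let ?P = "\<Prod>l\<in>S. 1 - 1 / (of_int l :: real) ^ 2"
  obtain m' where m: "m = p * m'"
    using insert.prems(1) by blast
  have "prime p"
    using insert.prems(1) by blast
  then have "p > 0"
    by (rule prime_gt_0_int)
  then have "m' > 0"
    using insert.prems(2) by (simp add: m zero_less_mult_iff)
  have "l dvd m'" if "l \<in> S" for l
  proof -
    have "prime l" "l dvd p * m'" "l \<noteq> p"
      using insert that by (auto simp: m)
    then show ?thesis
      using \<open>prime p\<close> primes_dvd_imp_eq prime_dvd_mult_iff by metis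
  qed
  then have IH: "real (card (residues_avoiding m' S)) = of_int m' ^ 2 * ?P"
    using insert.IH \<open>m' > 0\<close> insert.prems(1) by blast
  define B where "B = {x \<in> residues_avoiding m S. p dvd fst x \<and> p dvd snd x}"
  have "B = (\<lambda>(u, v). (p * u, p * v)) ` residues_avoiding m' S"
    unfolding B_def using \<open>prime p\<close> insert.hyps(2) insert.prems(1) m
    by (intro residues_avoiding_multiples) auto
  moreover have "inj (\<lambda>(u, v). (p * u, p * v))"
    using \<open>p > 0\<close> by (auto simp: inj_def)
  ultimately have "card B = card (residues_avoiding m' S)"
    by (simp add: card_image inj_on_subset)
  moreover have "residues_avoiding m (insert p S) = residues_avoiding m S - B"
    by (auto simp: B_def residues_avoiding_def)
  moreover have "B \<subseteq> residues_avoiding m S"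
    by (auto simp: B_def)
  then have "card (residues_avoiding m S - B) = card (residues_avoiding m S) - card B"
    "card B \<le> card (residues_avoiding m S)"
    by (simp_all add: card_Diff_subset card_mono finite_subset)
  ultimately have "real (card (residues_avoiding m (insert p S))) =
      real (card (residues_avoiding m S)) - real (card (residues_avoiding m' S))"
    by (simp add: of_nat_diff)
  also have "\<dots> = of_int m ^ 2 * ?P - of_int m' ^ 2 * ?P"
    using insert IH by simp
  also have "\<dots> = of_int m ^ 2 * ((1 - 1 / of_int p ^ 2) * ?P)"
    using \<open>p > 0\<close> by (simp add: m field_simps)
  finally show ?case
    using insert.hyps by simp
qed

lemma card_primitive_residues:
  assumes "m > 0"
  shows "real (card (primitive_residues m)) =
    of_int m ^ 2 * (\<Prod>l\<in>{l. prime l \<and> l dvd m}. 1 - 1 / of_int l ^ 2)"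
proof -
  have "{l. prime l \<and> l dvd m} \<subseteq> {0..m}"
    using assms by (auto dest: zdvd_imp_le prime_ge_0_int)
  then have "finite {l. prime l \<and> l dvd m}"
    using finite_subset by blast
  then show ?thesis
    unfolding primitive_residues_def using assms by (intro card_residues_avoiding) simp_all
qed

lemma prime_divisors_int:
  "{l :: int. prime l \<and> l dvd int n} = int ` {p. prime p \<and> p dvd n}"
proof (intro equalityI subsetI)
  fix l :: int
  assume l: "l \<in> {l. prime l \<and> l dvd int n}"
  then obtain p where "l = int p"
    using prime_ge_0_int nonneg_int_cases by blast
  then show "l \<in> int ` {p. prime p \<and> p dvd n}"
    using l by (auto simp: prime_nat_int_transfer)
qed (auto simp: prime_nat_int_transfer)

section \<open>Counting cusps\<close>

lemma bij_betw_cusps_fibres: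
  assumes "\<And>x y. y \<in> orbit G x \<longleftrightarrow> \<kappa> y = \<kappa> x"
  shows "bij_betw (\<lambda>k. \<kappa> -` {k}) (range \<kappa>) (cusps G)"
proof (rule bij_betw_imageI)
  show "inj_on (\<lambda>k. \<kappa> -` {k}) (range \<kappa>)"
    by (auto intro!: inj_onI)
  have "orbit G = (\<lambda>x. \<kappa> -` {\<kappa> x})"
    by (rule ext) (simp add: set_eq_iff assms)
  then show "(\<lambda>k. \<kappa> -` {k}) ` range \<kappa> = cusps G"
    by (simp add: cusps_def image_image)
qed

lemma cusps_image_conj:
  assumes "bij f" "\<And>g x. g \<in> G \<Longrightarrow> f (moebius g x) = moebius (\<sigma> g) (f x)"
  shows "bij_betw (image f) (cusps G) (cusps (\<sigma> ` G))"
proof (rule bij_betw_imageI)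
  show "inj_on (image f) (cusps G)"
    using bij_is_inj[OF assms(1)] by (simp add: inj_on_def inj_image_eq_iff)
  have orbit_conj: "orbit (\<sigma> ` G) (f x) = f ` orbit G x" for x
    unfolding orbit_def image_image by (rule image_cong) (simp_all add: assms(2))
  have "cusps (\<sigma> ` G) = orbit (\<sigma> ` G) ` range f"
    using bij_is_surj[OF assms(1)] by (simp add: cusps_def)
  also have "\<dots> = image f ` cusps G"
    by (simp add: cusps_def image_image orbit_conj)
  finally show "image f ` cusps G = cusps (\<sigma> ` G)"
    by (rule sym)
qed

lemma card_cusps_Gamma_pm:
  assumes "m \<ge> 3"
  shows "finite (cusps (Gamma_pm m)) \<and> 2 * card (cusps (Gamma_pm m)) = card (primitive_residues m)"
proof -
  have "bij_betw (\<lambda>k. cusp_class m -` {k}) (residue_class m ` primitive_residues m)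
      (cusps (Gamma_pm m))"
    using bij_betw_cusps_fibres[of "Gamma_pm m" "cusp_class m", OF orbit_Gamma_pm_iff] assms
    by (simp add: range_cusp_class)
  then show ?thesis
    using bij_betw_finite bij_betw_same_card card_residue_classes[OF assms] by fastforce
qed

definition scale_cusp :: "rat \<Rightarrow> rat option \<Rightarrow> rat option" where
  "scale_cusp r = map_option ((*) r)"

lemma bij_scale_cusp:
  assumes "r \<noteq> 0"
  shows "bij (scale_cusp r)"
proof (rule o_bij)
  have "scale_cusp r (scale_cusp (1 / r) x) = x" "scale_cusp (1 / r) (scale_cusp r x) = x" for x
    using assms by (cases x; simp add: scale_cusp_def)+
  then show "scale_cusp r \<circ> scale_cusp (1 / r) = id" "scale_cusp (1 / r) \<circ> scale_cusp r = id"
    by (simp_all add: fun_eq_iff)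
qed

text \<open>Conjugation by \<open>diag(k, 1)\<close>; it is exact only when \<open>k\<close> divides the lower left entry.\<close>

fun conj_diag :: "int \<Rightarrow> mat2 \<Rightarrow> mat2" where
  "conj_diag k (a, b, c, d) = (a, k * b, c div k, d)"

lemma scale_cusp_moebius:
  assumes "k \<noteq> 0" "k dvd c"
  shows "scale_cusp (of_int k) (moebius (a, b, c, d) x) =
    moebius (conj_diag k (a, b, c, d)) (scale_cusp (of_int k) x)"
proof -
  obtain c' where c: "c = k * c'"
    using assms(2) by blast
  then have "c div k = c'"
    using assms(1) by simp
  show ?thesis
  proof (cases x)
    case (Some r)
    have "of_int c * r + of_int d = 0 \<longleftrightarrow> of_int c' * (of_int k * r) + of_int d = 0"
      by (simp add: c algebra_simps)
    moreover have "of_int k * ((of_int a * r + of_int b) / (of_int c * r + of_int d)) =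
       (of_int a * (of_int k * r) + of_int (k * b)) / (of_int c' * (of_int k * r) + of_int d)"
      by (simp add: c algebra_simps)
    ultimately show ?thesis
      using \<open>c div k = c'\<close> by (simp add: Some scale_cusp_def)
  qed (use assms \<open>c div k = c'\<close> in \<open>auto simp: c scale_cusp_def\<close>)
qed

lemma conj_diag_Gamma_n:
  assumes "n > 0"
  shows "conj_diag (int n) ` Gamma_n n = Gamma_pm (int n)"
proof (intro equalityI subsetI)
  fix h
  assume "h \<in> conj_diag (int n) ` Gamma_n n"
  then obtain a b c d where g: "(a, b, c, d) \<in> Gamma_n n" "h = conj_diag (int n) (a, b, c, d)"
    by auto
  then have "int n * int n dvd c"
    by (simp add: Gamma_n_def power2_eq_square)
  then obtain c' where "c = int n * (int n * c')"
    by (metis dvdE mult.assoc)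
  then show "h \<in> Gamma_pm (int n)"
    using g assms by (auto simp: Gamma_n_def Gamma_pm_def SL2Z_def cong_def algebra_simps)
next
  fix h
  assume h: "h \<in> Gamma_pm (int n)"
  obtain a b c d where hd: "h = (a, b, c, d)"
    by (cases h) auto
  obtain b' c' where "b = int n * b'" "c = int n * c'"
    using h by (auto simp: hd Gamma_pm_def mod_eq_0_iff_dvd elim!: dvdE)
  then have "(a, b', int n * c, d) \<in> Gamma_n n" "conj_diag (int n) (a, b', int n * c, d) = h"
    using h assms by (auto simp: hd Gamma_n_def Gamma_pm_def SL2Z_def cong_def power2_eq_square algebra_simps)
  then show "h \<in> conj_diag (int n) ` Gamma_n n"
    by (metis image_eqI)
qed

lemma scale_cusp_moebius_Gamma_n:
  assumes "n > 0" "g \<in> Gamma_n n"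
  shows "scale_cusp (of_nat n) (moebius g x) = moebius (conj_diag (int n) g) (scale_cusp (of_nat n) x)"
proof -
  obtain a b c d where g: "g = (a, b, c, d)"
    by (cases g) auto
  have "int n dvd c"
    using assms(2) by (auto simp: g Gamma_n_def power2_eq_square intro: dvd_mult_left)
  then show ?thesis
    using scale_cusp_moebius[of "int n" c a b d x] assms(1) by (simp add: g)
qed

lemma bij_betw_cusps_Gamma_n_Gamma_pm:
  assumes "n > 0"
  shows "bij_betw (image (scale_cusp (of_nat n))) (cusps (Gamma_n n)) (cusps (Gamma_pm (int n)))"
proof -
  have "bij_betw (image (scale_cusp (of_nat n))) (cusps (Gamma_n n))
      (cusps (conj_diag (int n) ` Gamma_n n))"
    using assms by (intro cusps_image_conj bij_scale_cusp scale_cusp_moebius_Gamma_n) simp_all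
  then show ?thesis
    using conj_diag_Gamma_n[OF assms] by simp
qed

theorem proposition7p4:
  fixes n :: nat
  assumes "n \<ge> 3"
  shows "finite (cusps (Gamma_n n)) \<and>
    real (card (cusps (Gamma_n n))) =
      (real n)^2 / 2 * (\<Prod>p\<in>{p. prime p \<and> p dvd n}. (1 - 1 / (real p)^2))"
proof -
  define m where "m = int n"
  have "n > 0" "m \<ge> 3"
    using assms by (simp_all add: m_def)
  have conj: "bij_betw (image (scale_cusp (of_nat n))) (cusps (Gamma_n n)) (cusps (Gamma_pm m))"
    unfolding m_def using bij_betw_cusps_Gamma_n_Gamma_pm[OF \<open>n > 0\<close>] .
  have "finite (cusps (Gamma_n n))" "2 * card (cusps (Gamma_n n)) = card (primitive_residues m)"
    using card_cusps_Gamma_pm[OF \<open>m \<ge> 3\<close>] bij_betw_finite[OF conj] bij_betw_same_card[OF conj]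
    by simp_all
  moreover have "2 * real (card (cusps (Gamma_n n))) =
      real n ^ 2 * (\<Prod>l\<in>{l. prime l \<and> l dvd m}. 1 - 1 / of_int l ^ 2)"
    using calculation(2) card_primitive_residues[of m] \<open>m \<ge> 3\<close> by (simp add: m_def flip: of_nat_mult)
  moreover have "(\<Prod>l\<in>{l. prime l \<and> l dvd m}. 1 - 1 / (of_int l :: real) ^ 2) =
      (\<Prod>p\<in>{p. prime p \<and> p dvd n}. 1 - 1 / real p ^ 2)"
    unfolding m_def prime_divisors_int by (simp add: prod.reindex)
  ultimately show ?thesis
    by simp
qed

end
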